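(* Let $E_a\subseteq E$ be a set of directed links without self-loops, with maximum out-degree $D_a^+$ and maximum in-degree $D_a^-$ in $G_a=(V,E_a)$, and let $D$ be the maximum number of neighbors (excluding itself) of any node in the base topology $G$. Then the maximum degree $D_c$ of the conflict graph of $E_a$ satisfies $$D_c\le(D+1)\big(D_a^++D_a^-\big).$$
   Context: $G=(V,E)$ is a bidirected directed base topology on $V=\{1,\dots,n\}$ (with self-loops, which are not counted as neighbors). Communication model: two distinct directed links $(i,j),(k,l)$ (with $i\ne j$, $k\ne l$) can be scheduled in the same transmission slot iff (a) $i\ne l$ and $j\ne k$ (half-duplex), and (b) if $i\ne k$ then $(i,l)\notin E$ and $(k,j)\notin E$ (interference); otherwise they conflict. The conflict graph of $E_a$ is the undirected graph with vertex set $E_a$ and an edge between every conflicting pair; $D_c$ is its maximum vertex degree. In-/out-degrees in $G_a$ are $d_a^-(j)=|\{i:(i,j)\in E_a\}|$, $d_a^+(j)=|\{i:(j,i)\in E_a\}|$, with maxima $D_a^-,D_a^+$. *)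

theory Defs
  imports Main
begin

definition base_topology :: "nat \<Rightarrow> (nat \<times> nat) set \<Rightarrow> bool" where
  "base_topology n E \<longleftrightarrow>
     E \<subseteq> {1..n} \<times> {1..n} \<and>
     (\<forall>i j. (i, j) \<in> E \<longrightarrow> (j, i) \<in> E) \<and>
     (\<forall>i\<in>{1..n}. (i, i) \<in> E)"

definition nbrs :: "(nat \<times> nat) set \<Rightarrow> nat \<Rightarrow> nat set" where
  "nbrs E i = {j. j \<noteq> i \<and> (i, j) \<in> E}"

definition max_nbrs :: "nat \<Rightarrow> (nat \<times> nat) set \<Rightarrow> nat" where
  "max_nbrs n E = Max ((\<lambda>i. card (nbrs E i)) ` {1..n})"

definition conflict :: "(nat \<times> nat) set \<Rightarrow> nat \<times> nat \<Rightarrow> nat \<times> nat \<Rightarrow> bool" where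
  "conflict E e f = (case e of (i, j) \<Rightarrow> case f of (k, l) \<Rightarrow>
     \<not> ((i \<noteq> l \<and> j \<noteq> k) \<and> (i \<noteq> k \<longrightarrow> (i, l) \<notin> E \<and> (k, j) \<notin> E)))"

definition conflict_degree :: "(nat \<times> nat) set \<Rightarrow> (nat \<times> nat) set \<Rightarrow> nat \<times> nat \<Rightarrow> nat" where
  "conflict_degree E Ea e = card {f \<in> Ea. f \<noteq> e \<and> (conflict E e f \<or> conflict E f e)}"

(* D_c: maximum vertex degree of the conflict graph (0 if Ea is empty) *)
definition max_conflict_degree :: "(nat \<times> nat) set \<Rightarrow> (nat \<times> nat) set \<Rightarrow> nat" where
  "max_conflict_degree E Ea = Max (insert 0 (conflict_degree E Ea ` Ea))"

definition in_deg :: "(nat \<times> nat) set \<Rightarrow> nat \<Rightarrow> nat" where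
  "in_deg Ea j = card {i. (i, j) \<in> Ea}"

definition out_deg :: "(nat \<times> nat) set \<Rightarrow> nat \<Rightarrow> nat" where
  "out_deg Ea j = card {i. (j, i) \<in> Ea}"

definition max_in_deg :: "nat \<Rightarrow> (nat \<times> nat) set \<Rightarrow> nat" where
  "max_in_deg n Ea = Max ((in_deg Ea) ` {1..n})"

definition max_out_deg :: "nat \<Rightarrow> (nat \<times> nat) set \<Rightarrow> nat" where
  "max_out_deg n Ea = Max ((out_deg Ea) ` {1..n})"

end

theory Submission
  imports Defs
begin

text \<open>A link \<open>(k, l)\<close> conflicting with \<open>(i, j)\<close> has its head \<open>l\<close> in the closed
  neighbourhood of \<open>i\<close> or its tail \<open>k\<close> in the closed neighbourhood of \<open>j\<close>: the self-loops
  of \<open>G\<close> cover the half-duplex cases and symmetry turns \<open>(k, j) \<in> E\<close> into \<open>(j, k) \<in> E\<close>.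
  A closed neighbourhood has at most \<open>D + 1\<close> nodes, each the head of at most \<open>D\<^sub>a\<^sup>-\<close>
  and the tail of at most \<open>D\<^sub>a\<^sup>+\<close> links of \<open>E\<^sub>a\<close>.\<close>

lemma base_topology_finite:
  "base_topology n E \<Longrightarrow> finite E"
  unfolding base_topology_def by (meson finite_SigmaI finite_atLeastAtMost finite_subset)

lemma base_topology_sym:
  "base_topology n E \<Longrightarrow> sym E"
  unfolding base_topology_def by (simp add: sym_def)

lemma card_Image_le_max_nbrs:
  assumes "base_topology n E" and "i \<in> {1..n}"
  shows "card (E `` {i}) \<le> max_nbrs n E + 1"
proof -
  have "E `` {i} = insert i (nbrs E i)"
    using assms unfolding base_topology_def nbrs_def by auto
  moreover have "nbrs E i \<subseteq> {1..n}"
    using assms(1) unfolding base_topology_def nbrs_def by auto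
  then have "finite (nbrs E i)"
    by (rule finite_subset) simp
  moreover have "card (nbrs E i) \<le> max_nbrs n E"
    unfolding max_nbrs_def using assms(2) by (intro Max_ge) auto
  ultimately show ?thesis
    by (simp add: card_insert_if)
qed

lemma in_deg_le_max_in_deg:
  "j \<in> {1..n} \<Longrightarrow> in_deg Ea j \<le> max_in_deg n Ea"
  unfolding max_in_deg_def by (intro Max_ge) auto

lemma out_deg_le_max_out_deg:
  "j \<in> {1..n} \<Longrightarrow> out_deg Ea j \<le> max_out_deg n Ea"
  unfolding max_out_deg_def by (intro Max_ge) auto

lemma card_links_into_le_sum_in_deg:
  assumes "finite S"
  shows "card {f \<in> Ea. snd f \<in> S} \<le> (\<Sum>l\<in>S. in_deg Ea l)"
proof -
  have "{f \<in> Ea. snd f \<in> S} = (\<Union>l\<in>S. (\<lambda>k. (k, l)) ` {k. (k, l) \<in> Ea})"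
    by force
  also have "card \<dots> \<le> (\<Sum>l\<in>S. card ((\<lambda>k. (k, l)) ` {k. (k, l) \<in> Ea}))"
    using assms by (rule card_UN_le)
  also have "\<dots> = (\<Sum>l\<in>S. in_deg Ea l)"
    unfolding in_deg_def by (simp add: card_image inj_on_def)
  finally show ?thesis .
qed

lemma card_links_from_le_sum_out_deg:
  assumes "finite S"
  shows "card {f \<in> Ea. fst f \<in> S} \<le> (\<Sum>k\<in>S. out_deg Ea k)"
proof -
  have "{f \<in> Ea. fst f \<in> S} = (\<Union>k\<in>S. (\<lambda>l. (k, l)) ` {l. (k, l) \<in> Ea})"
    by force
  also have "card \<dots> \<le> (\<Sum>k\<in>S. card ((\<lambda>l. (k, l)) ` {l. (k, l) \<in> Ea}))"
    using assms by (rule card_UN_le)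
  also have "\<dots> = (\<Sum>k\<in>S. out_deg Ea k)"
    unfolding out_deg_def by (simp add: card_image inj_on_def)
  finally show ?thesis .
qed

lemma conflict_imp_adjacent:
  assumes "sym E" and "(i, i) \<in> E" and "(j, j) \<in> E"
    and "conflict E (i, j) (k, l) \<or> conflict E (k, l) (i, j)"
  shows "(i, l) \<in> E \<or> (j, k) \<in> E"
  using assms unfolding conflict_def sym_def by auto

lemma conflict_degree_le:
  assumes "base_topology n E" and "Ea \<subseteq> E" and "(i, j) \<in> Ea"
  shows "conflict_degree E Ea (i, j)
           \<le> (max_nbrs n E + 1) * (max_out_deg n Ea + max_in_deg n Ea)"
proof -
  let ?D = "max_nbrs n E"
  have ij: "i \<in> {1..n}" "j \<in> {1..n}"
    using assms unfolding base_topology_def by auto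
  have finEa: "finite Ea"
    using base_topology_finite[OF assms(1)] assms(2) by (rule finite_subset[rotated])
  have nbhd_in_V: "E `` {v} \<subseteq> {1..n}" for v
    using assms(1) unfolding base_topology_def by auto
  then have fin_nbhd: "finite (E `` {v})" for v
    by (rule finite_subset) simp
  have self_loop: "(v, v) \<in> E" if "v \<in> {1..n}" for v
    using assms(1) that unfolding base_topology_def by blast
  let ?into_i = "{f \<in> Ea. snd f \<in> E `` {i}}" and ?from_j = "{f \<in> Ea. fst f \<in> E `` {j}}"
  have "{f \<in> Ea. f \<noteq> (i, j) \<and> (conflict E (i, j) f \<or> conflict E f (i, j))} \<subseteq> ?into_i \<union> ?from_j"
    using conflict_imp_adjacent[OF base_topology_sym[OF assms(1)]
        self_loop[OF ij(1)] self_loop[OF ij(2)]]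
    by fastforce
  then have "conflict_degree E Ea (i, j) \<le> card (?into_i \<union> ?from_j)"
    unfolding conflict_degree_def using finEa by (intro card_mono) auto
  also have "\<dots> \<le> card ?into_i + card ?from_j"
    by (rule card_Un_le)
  also have "\<dots> \<le> (\<Sum>l\<in>E `` {i}. in_deg Ea l) + (\<Sum>k\<in>E `` {j}. out_deg Ea k)"
    using fin_nbhd by (intro add_mono card_links_into_le_sum_in_deg card_links_from_le_sum_out_deg)
  also have "\<dots> \<le> (\<Sum>l\<in>E `` {i}. max_in_deg n Ea) + (\<Sum>k\<in>E `` {j}. max_out_deg n Ea)"
    using in_deg_le_max_in_deg out_deg_le_max_out_deg nbhd_in_V
    by (intro add_mono sum_mono) blast+
  also have "\<dots> = card (E `` {i}) * max_in_deg n Ea + card (E `` {j}) * max_out_deg n Ea"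
    by simp
  also have "\<dots> \<le> (?D + 1) * max_in_deg n Ea + (?D + 1) * max_out_deg n Ea"
    using card_Image_le_max_nbrs[OF assms(1)] ij by (intro add_mono mult_right_mono) auto
  finally show ?thesis
    by (simp add: algebra_simps)
qed

theorem lemma4:
  fixes n :: nat and E Ea :: "(nat \<times> nat) set"
  assumes "base_topology n E"
    and "Ea \<subseteq> E"
    and "\<forall>i. (i, i) \<notin> Ea"
  shows "max_conflict_degree E Ea
           \<le> (max_nbrs n E + 1) * (max_out_deg n Ea + max_in_deg n Ea)"
proof -
  \<comment> \<open>The bound holds without assuming that \<open>E\<^sub>a\<close> is loop-free.\<close>
  have "finite Ea"
    using base_topology_finite[OF assms(1)] assms(2) by (rule finite_subset[rotated])
  then show ?thesis
    unfolding max_conflict_degree_def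
    using conflict_degree_le[OF assms(1,2)] by (subst Max_le_iff) auto
qed

end
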